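(* For $n=0,1,2,\ldots$ let $R_n=\sum_{k=0}^n\binom{n}{k}\binom{n+k}{k}\frac{1}{2k-1}$. Then the sequence $\{\sqrt[n]{R_n}\}_{n=1}^\infty$ is strictly increasing, and $\lim_{n\to\infty}\sqrt[n]{R_n}=3+2\sqrt{2}$. *)

theory Defs
  imports "HOL-Analysis.Analysis"
begin

definition R :: "nat \<Rightarrow> real" where
  "R n = (\<Sum>k=0..n. real (n choose k) * real ((n + k) choose k) * (1 / (2 * real k - 1)))"

end

(*
  Zeilberger's algorithm yields the recurrence
    (n + 3) R (n + 3) = (7n + 13) R (n + 2) - (7n + 15) R (n + 1) + (n + 1) R n,
  whose limiting characteristic polynomial (x - 1) (x^2 - 6x + 1) has dominant root
  rho = 3 + 2 sqrt 2.  From n = 6 on, the recurrence propagates the ratio bounds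
  rho n / (n + 2) <= R (n + 1) / R n <= rho by induction.  The upper bound gives
  R n <= C rho^n and the lower one R n >= c rho^n / n^2, so the n-th root of R n tends
  to rho.  They also give R n < (rho n / (n + 2))^n <= (R (n + 1) / R n)^n, i.e.
  R n ^ (n + 1) < R (n + 1) ^ n, which is the monotonicity of the n-th roots;
  the cases n < 6 are numerical.
*)
theory Submission
  imports Defs
begin

section \<open>The recurrence\<close>

lemma fact_add_eq_fact_mult_pochhammer:
  "fact (m + j) = (fact m :: 'a :: {semiring_char_0, comm_semiring_1}) * pochhammer (of_nat m + 1) j"
  using pochhammer_product'[of 1 m j] by (simp add: pochhammer_fact add.commute)

lemma real_binomial_fact_lemma:
  "k \<le> n \<Longrightarrow> fact k * fact (n - k) * real (n choose k) = fact n"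
  by (metis binomial_fact_lemma of_nat_fact of_nat_mult)

lemma binomial_product_normalized:
  assumes "k \<le> n + d" "j \<le> d"
  shows "real ((n + j) choose k) * real ((n + j + k) choose k) * fact k ^ 2 * fact (n + d - k)
         = fact (n + k) * pochhammer (real (n + k) + 1) j * pochhammer (real (n + j) - real k + 1) (d - j)"
    (is "?C1 * ?C2 * _ * _ = _ * ?P1 * ?P2")
proof (cases "k \<le> n + j")
  case True
  have "fact (n + d - k) = fact (n + j - k) * ?P2"
    using fact_add_eq_fact_mult_pochhammer[of "n + j - k" "d - j", where 'a=real] True assms
    by (simp add: of_nat_diff)
  then have "?C1 * ?C2 * fact k ^ 2 * fact (n + d - k)
      = (fact k * fact (n + j - k) * ?C1) * fact k * ?C2 * ?P2"
    by (simp add: power2_eq_square mult_ac)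
  also have "\<dots> = fact (n + j + k) * ?P2"
    unfolding real_binomial_fact_lemma[OF True]
    using real_binomial_fact_lemma[of k "n + j + k"] by (simp add: mult_ac)
  also have "\<dots> = fact (n + k) * ?P1 * ?P2"
    using fact_add_eq_fact_mult_pochhammer[of "n + k" j, where 'a=real] by (simp add: add_ac)
  finally show ?thesis .
next
  case False
  have "?P2 = 0"
    unfolding pochhammer_eq_0_iff
    by (rule exI[of _ "k - (n + j) - 1"]) (use False assms in auto)
  with False show ?thesis by simp
qed

definition R_term :: "nat \<Rightarrow> nat \<Rightarrow> real" where
  "R_term n k = real (n choose k) * real ((n + k) choose k) / (2 * real k - 1)"

text \<open>The certificate found by Zeilberger's algorithm; it vanishes at \<open>k = 0\<close> and \<open>k = n + 4\<close>.\<close>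

definition R_cert :: "nat \<Rightarrow> nat \<Rightarrow> real" where
  "R_cert n k = - 4 * real k ^ 2 / ((real n + 1) * (real n + 3))
                  * real ((n + k) choose k) * real ((n + 3) choose k)"

lemma R_cert_normalized:
  assumes "k \<le> n + 3"
  shows "R_cert n k * fact k ^ 2 * fact (n + 3 - k) = - 4 * (real n + 2) * real k ^ 2 * fact (n + k)"
proof -
  have "fact n * (R_cert n k * fact k ^ 2 * fact (n + 3 - k))
      = - 4 * real k ^ 2 / ((real n + 1) * (real n + 3))
        * (fact k * fact (n + k - k) * real ((n + k) choose k))
        * (fact k * fact (n + 3 - k) * real ((n + 3) choose k))"
    by (simp add: R_cert_def power2_eq_square mult_ac)
  also have "\<dots> = - 4 * real k ^ 2 / ((real n + 1) * (real n + 3)) * fact (n + k) * fact (n + 3)"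
    using real_binomial_fact_lemma[of k "n + k"] real_binomial_fact_lemma[OF assms] by simp
  also have "\<dots> = fact n * (- 4 * (real n + 2) * real k ^ 2 * fact (n + k))"
  proof -
    have "fact (n + 3) = fact n * ((real n + 1) * (real n + 2) * (real n + 3))"
      by (simp add: eval_nat_numeral algebra_simps)
    moreover have "(real n + 1) * (real n + 3) \<noteq> 0" by simp
    ultimately show ?thesis by (simp add: field_simps)
  qed
  finally show ?thesis by simp
qed

lemma R_cert_Suc_normalized:
  assumes "k \<le> n + 3"
  shows "R_cert n (Suc k) * fact k ^ 2 * fact (n + 3 - k)
         = - 4 * (real n + 2) * (real (n + k) + 1) * (real n + 3 - real k) * fact (n + k)"
proof (cases "k = n + 3")
  case True
  then show ?thesis by (simp add: R_cert_def)
next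
  case False
  then have "Suc k \<le> n + 3" and "n + 3 - k = Suc (n + 3 - Suc k)" using assms by auto
  then have "(real k + 1) ^ 2 * (R_cert n (Suc k) * fact k ^ 2 * fact (n + 3 - k))
      = (real n + 3 - real k) * (R_cert n (Suc k) * fact (Suc k) ^ 2 * fact (n + 3 - Suc k))"
    using assms by (simp add: of_nat_diff power2_eq_square algebra_simps)
  also have "\<dots> = (real n + 3 - real k) * (- 4 * (real n + 2) * real (Suc k) ^ 2 * fact (n + Suc k))"
    unfolding R_cert_normalized[OF \<open>Suc k \<le> n + 3\<close>] ..
  also have "\<dots> = (real k + 1) ^ 2 * (- 4 * (real n + 2) * (real (n + k) + 1) * (real n + 3 - real k) * fact (n + k))"
    by (simp add: algebra_simps)
  finally show ?thesis by simp
qed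

lemma R_term_telescoping:
  assumes "k \<le> n + 3"
  shows "(real n + 3) * R_term (n + 3) k - (7 * real n + 13) * R_term (n + 2) k
         + (7 * real n + 15) * R_term (n + 1) k - (real n + 1) * R_term n k
         = R_cert n (Suc k) - R_cert n k"
proof -
  define x y where "x = real n" and "y = real k"
  define N :: real where "N = fact k ^ 2 * fact (n + 3 - k)"
  define F :: real where "F = fact (n + k)"
  have "2 * k \<noteq> 1" by presburger
  then have "2 * y - 1 \<noteq> 0"
    unfolding y_def by (metis eq_iff_diff_eq_0 of_nat_1 of_nat_eq_iff of_nat_mult of_nat_numeral)
  have B: "(2 * y - 1) * N * R_term (n + j) k
      = F * pochhammer (x + y + 1) j * pochhammer (x + real j - y + 1) (3 - j)"
    if "j \<le> 3" for j
    using binomial_product_normalized[OF assms that] \<open>2 * y - 1 \<noteq> 0\<close>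
    by (simp add: R_term_def N_def F_def x_def y_def mult_ac)
  have B0: "(2 * y - 1) * N * R_term n k = F * ((x - y + 1) * (x - y + 2) * (x - y + 3))"
    using B[of 0] by (simp add: eval_nat_numeral pochhammer_Suc algebra_simps)
  have B1: "(2 * y - 1) * N * R_term (n + 1) k = F * ((x + y + 1) * (x - y + 2) * (x - y + 3))"
    using B[of 1] by (simp add: eval_nat_numeral pochhammer_Suc algebra_simps)
  have B2: "(2 * y - 1) * N * R_term (n + 2) k = F * ((x + y + 1) * (x + y + 2) * (x - y + 3))"
    using B[of 2] by (simp add: eval_nat_numeral pochhammer_Suc algebra_simps)
  have B3: "(2 * y - 1) * N * R_term (n + 3) k = F * ((x + y + 1) * (x + y + 2) * (x + y + 3))"
    using B[of 3] by (simp add: eval_nat_numeral pochhammer_Suc algebra_simps)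
  have "(2 * y - 1) * N * ((x + 3) * R_term (n + 3) k - (7 * x + 13) * R_term (n + 2) k
         + (7 * x + 15) * R_term (n + 1) k - (x + 1) * R_term n k)
      = (x + 3) * ((2 * y - 1) * N * R_term (n + 3) k) - (7 * x + 13) * ((2 * y - 1) * N * R_term (n + 2) k)
         + (7 * x + 15) * ((2 * y - 1) * N * R_term (n + 1) k) - (x + 1) * ((2 * y - 1) * N * R_term n k)"
    by (simp add: algebra_simps)
  also have "\<dots> = F * ((x + 3) * (x + y + 1) * (x + y + 2) * (x + y + 3)
        - (7 * x + 13) * (x + y + 1) * (x + y + 2) * (x - y + 3)
        + (7 * x + 15) * (x + y + 1) * (x - y + 2) * (x - y + 3)
        - (x + 1) * (x - y + 1) * (x - y + 2) * (x - y + 3))"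
    unfolding B0 B1 B2 B3 by (simp add: algebra_simps)
  also have "\<dots> = (2 * y - 1) * F * (4 * (x + 2) * y ^ 2 - 4 * (x + 2) * (x + y + 1) * (x - y + 3))"
    by (simp add: algebra_simps power2_eq_square)
  also have "\<dots> = (2 * y - 1) * (R_cert n (Suc k) * fact k ^ 2 * fact (n + 3 - k)
                                 - R_cert n k * fact k ^ 2 * fact (n + 3 - k))"
    unfolding R_cert_normalized[OF assms] R_cert_Suc_normalized[OF assms]
    by (simp add: F_def x_def y_def algebra_simps)
  also have "\<dots> = (2 * y - 1) * N * (R_cert n (Suc k) - R_cert n k)"
    by (simp add: N_def algebra_simps)
  finally show ?thesis
    using \<open>2 * y - 1 \<noteq> 0\<close> by (simp add: N_def x_def)
qed

lemma R_eq_sum_R_term: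
  assumes "n \<le> N"
  shows "R n = (\<Sum>k=0..N. R_term n k)"
proof -
  have "R n = (\<Sum>k=0..n. R_term n k)"
    by (simp add: R_def R_term_def)
  also have "\<dots> = (\<Sum>k=0..N. R_term n k)"
    by (rule sum.mono_neutral_left) (use assms in \<open>auto simp: R_term_def\<close>)
  finally show ?thesis .
qed

lemma R_recurrence:
  "(real n + 3) * R (n + 3)
   = (7 * real n + 13) * R (n + 2) - (7 * real n + 15) * R (n + 1) + (real n + 1) * R n"
proof -
  have "(real n + 3) * R (n + 3) - (7 * real n + 13) * R (n + 2)
        + (7 * real n + 15) * R (n + 1) - (real n + 1) * R n
      = (\<Sum>k=0..n + 3. (real n + 3) * R_term (n + 3) k - (7 * real n + 13) * R_term (n + 2) k
                       + (7 * real n + 15) * R_term (n + 1) k - (real n + 1) * R_term n k)"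
    by (simp add: R_eq_sum_R_term[of _ "n + 3"] sum_distrib_left sum_subtractf sum.distrib)
  also have "\<dots> = (\<Sum>k=0..n + 3. R_cert n (Suc k) - R_cert n k)"
    by (intro sum.cong refl R_term_telescoping) simp
  also have "\<dots> = R_cert n (Suc (n + 3)) - R_cert n 0"
    by (rule sum_Suc_diff) simp
  also have "\<dots> = 0"
    by (simp add: R_cert_def)
  finally show ?thesis by linarith
qed

lemma R_values:
  "R 1 = 1" "R 2 = 7" "R 3 = 25" "R 4 = 87" "R 5 = 329" "R 6 = 1359" "R 7 = 6001" "R 8 = 27759"
proof -
  have R0: "R 0 = -1" by (simp add: R_def)
  show R1: "R 1 = 1" by (simp add: R_def)
  show R2: "R 2 = 7" by (simp add: R_def numeral_2_eq_2)
  show R3: "R 3 = 25" using R_recurrence[of 0] R0 R1 R2 by (simp add: eval_nat_numeral)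
  show R4: "R 4 = 87" using R_recurrence[of 1] R1 R2 R3 by (simp add: eval_nat_numeral)
  show R5: "R 5 = 329" using R_recurrence[of 2] R2 R3 R4 by (simp add: eval_nat_numeral)
  show R6: "R 6 = 1359" using R_recurrence[of 3] R3 R4 R5 by (simp add: eval_nat_numeral)
  show R7: "R 7 = 6001" using R_recurrence[of 4] R4 R5 R6 by (simp add: eval_nat_numeral)
  show "R 8 = 27759" using R_recurrence[of 5] R5 R6 R7 by (simp add: eval_nat_numeral)
qed

section \<open>Ratio bounds\<close>

text \<open>\<open>1 / rho = 6 - rho\<close> is the other root of \<open>x\<^sup>2 - 6 x + 1\<close>.\<close>

definition rho :: real where "rho = 3 + 2 * sqrt 2"

lemma rho_bounds: "577 / 99 < rho" "rho < 204 / 35"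
proof -
  have "140 / 99 < sqrt 2" by (rule real_less_rsqrt) (simp add: power2_eq_square)
  moreover have "sqrt 2 < 99 / 70" by (rule real_less_lsqrt) (simp_all add: power2_eq_square)
  ultimately show "577 / 99 < rho" "rho < 204 / 35" unfolding rho_def by simp_all
qed

lemma rho_mult_complement: "rho * (6 - rho) = 1"
  unfolding rho_def by (simp add: algebra_simps)

lemma le_rho_mult_iff:
  "y \<le> rho * x \<longleftrightarrow> (6 - rho) * y \<le> x"
  "rho * y \<le> x \<longleftrightarrow> y \<le> (6 - rho) * x"
proof -
  have "rho > 0" using rho_bounds by simp
  moreover have "6 - rho = 1 / rho" using rho_mult_complement \<open>rho > 0\<close> by (simp add: field_simps)
  ultimately show "y \<le> rho * x \<longleftrightarrow> (6 - rho) * y \<le> x" "rho * y \<le> x \<longleftrightarrow> y \<le> (6 - rho) * x"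
    by (simp_all add: pos_divide_le_eq pos_le_divide_eq mult.commute)
qed

lemma ratio_lower_bound_coefficient:
  fixes m :: real
  assumes m: "4 \<le> m"
  shows "rho * (m + 1) * (m + 2) * (m + 3)
         \<le> (m + 4) * ((m + 1) * (7 * m + 13) - (m + 3) * (7 * m + 55 - (m + 9) * rho))"
proof -
  define q where "q = m * m"
  have "4 * m \<le> q" unfolding q_def using m by (intro mult_right_mono) auto
  have "577 / 99 * (10 * q + 64 * m + 102) \<le> rho * (10 * q + 64 * m + 102)"
    using rho_bounds m \<open>4 * m \<le> q\<close> by (intro mult_right_mono) auto
  then have "56 * q + 376 * m + 608 \<le> rho * (10 * q + 64 * m + 102)"
    using \<open>4 * m \<le> q\<close> m by (simp add: field_simps)
  moreover have "(m + 4) * ((m + 1) * (7 * m + 13) - (m + 3) * (7 * m + 55 - (m + 9) * rho))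
        - rho * (m + 1) * (m + 2) * (m + 3)
      = rho * (10 * q + 64 * m + 102) - (56 * q + 376 * m + 608)"
    by (simp add: q_def algebra_simps)
  ultimately show ?thesis by linarith
qed

lemma ratio_lower_bound_step:
  fixes m x y z w :: real
  assumes m: "4 \<le> m" and z: "0 \<le> z"
    and xy: "y \<le> rho * x" and yz: "rho * (m + 1) / (m + 3) * y \<le> z"
    and rec: "(m + 3) * w = (7 * m + 13) * z - (7 * m + 15) * y + (m + 1) * x"
  shows "rho * (m + 2) / (m + 4) * z \<le> w"
proof -
  define K where "K = (m + 1) * (7 * m + 13) - (m + 3) * (7 * m + 55 - (m + 9) * rho)"
  define c where "c = m + 9 + (m + 1) * rho"
  have x: "(6 - rho) * y \<le> x"
    using xy le_rho_mult_iff(1) by blast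
  have y: "(m + 1) * y \<le> (6 - rho) * ((m + 3) * z)"
    using yz m le_rho_mult_iff(2)[of "(m + 1) * y" "(m + 3) * z"] by (simp add: field_simps)
  have "K * z = (m + 1) * (7 * m + 13) * z
                - ((m + 9) * (6 - rho) + (m + 1) * (rho * (6 - rho))) * ((m + 3) * z)"
    unfolding K_def rho_mult_complement by (simp add: algebra_simps)
  also have "\<dots> = (m + 1) * (7 * m + 13) * z - c * ((6 - rho) * ((m + 3) * z))"
    by (simp add: c_def algebra_simps)
  also have "\<dots> \<le> (m + 1) * (7 * m + 13) * z - c * ((m + 1) * y)"
    using y m rho_bounds by (simp add: c_def mult_left_mono)
  also have "\<dots> = (m + 1) * (7 * m + 13) * z - (m + 1) * (7 * m + 15) * y + (m + 1) * ((m + 1) * ((6 - rho) * y))"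
    by (simp add: c_def algebra_simps)
  also have "\<dots> \<le> (m + 1) * (7 * m + 13) * z - (m + 1) * (7 * m + 15) * y + (m + 1) * ((m + 1) * x)"
    using x m by (simp add: mult_left_mono)
  also have "\<dots> = (m + 1) * ((m + 3) * w)"
    unfolding rec by (simp add: algebra_simps)
  finally have Kz: "K * z \<le> (m + 1) * ((m + 3) * w)" .
  have coeff: "rho * (m + 1) * (m + 2) * (m + 3) \<le> (m + 4) * K"
    unfolding K_def by (rule ratio_lower_bound_coefficient[OF m])
  from mult_right_mono[OF coeff z]
  have "rho * (m + 1) * (m + 2) * (m + 3) * z \<le> (m + 4) * (K * z)"
    by (simp add: mult_ac)
  also have "\<dots> \<le> (m + 4) * ((m + 1) * ((m + 3) * w))"
    using Kz m by (simp add: mult_left_mono)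
  finally have "(m + 1) * (m + 3) * (rho * (m + 2) * z) \<le> (m + 1) * (m + 3) * ((m + 4) * w)"
    by (simp add: algebra_simps)
  then have "rho * (m + 2) * z \<le> (m + 4) * w"
    using m by (simp add: mult_le_cancel_left_pos)
  then show ?thesis using m by (simp add: field_simps)
qed

lemma ratio_upper_bound_step:
  fixes m x y z w :: real
  assumes m: "4 \<le> m" and z: "0 \<le> z"
    and xy: "rho * m / (m + 2) * x \<le> y" and yz: "z \<le> rho * y"
    and rec: "(m + 3) * w = (7 * m + 13) * z - (7 * m + 15) * y + (m + 1) * x"
  shows "w \<le> rho * z"
proof -
  define d where "d = m * (7 * m + 15) - (m + 1) * (m + 2) * (6 - rho)"
  have x: "m * x \<le> (6 - rho) * ((m + 2) * y)"
    using xy m le_rho_mult_iff(2)[of "m * x" "(m + 2) * y"] by (simp add: field_simps)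
  have y: "(6 - rho) * z \<le> y"
    using yz le_rho_mult_iff(1) by blast
  have d: "0 \<le> d"
  proof -
    have "(m + 1) * (m + 2) * (6 - rho) \<le> (m + 1) * (m + 2)"
      using rho_bounds m by (simp add: mult_left_le)
    moreover have "(m + 1) * (m + 2) \<le> m * (7 * m + 15)"
      using m by (simp add: algebra_simps) (smt (verit) mult_nonneg_nonneg)
    ultimately show ?thesis unfolding d_def by linarith
  qed
  have "m * ((m + 3) * w) = m * (7 * m + 13) * z - m * (7 * m + 15) * y + (m + 1) * (m * x)"
    unfolding rec by (simp add: algebra_simps)
  also have "\<dots> \<le> m * (7 * m + 13) * z - m * (7 * m + 15) * y + (m + 1) * ((6 - rho) * ((m + 2) * y))"
    using x m by (simp add: mult_left_mono)
  also have "\<dots> = m * (7 * m + 13) * z - d * y"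
    by (simp add: d_def algebra_simps)
  also have "\<dots> \<le> m * (7 * m + 13) * z - d * ((6 - rho) * z)"
    using y d by (simp add: mult_left_mono)
  also have "\<dots> = (m * (7 * m + 13) - m * (7 * m + 15) * (6 - rho)
                    + (m + 1) * (m + 2) * (6 * (6 - rho) - rho * (6 - rho))) * z"
    unfolding d_def by (simp add: algebra_simps)
  also have "\<dots> = (m * (m + 3) * rho + (28 * m + 70 - rho * (6 * m + 12))) * z"
    unfolding rho_mult_complement by (simp add: algebra_simps)
  also have "\<dots> \<le> m * (m + 3) * rho * z"
  proof -
    have "28 * m + 70 \<le> rho * (6 * m + 12)"
      using rho_bounds m mult_right_mono[of "577 / 99" rho "6 * m + 12"] by simp
    then have "(28 * m + 70 - rho * (6 * m + 12)) * z \<le> 0"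
      using z by (intro mult_nonpos_nonneg) auto
    then show ?thesis by (simp add: distrib_right)
  qed
  finally have "m * (m + 3) * w \<le> m * (m + 3) * (rho * z)"
    by (simp add: algebra_simps)
  then show ?thesis using m by (simp add: mult_le_cancel_left_pos)
qed


definition R_ratio_bounds :: "nat \<Rightarrow> bool" where
  "R_ratio_bounds n \<longleftrightarrow>
     0 < R n \<and> rho * real n / (real n + 2) * R n \<le> R (Suc n) \<and> R (Suc n) \<le> rho * R n"

lemma R_ratio_bounds_step:
  assumes "4 \<le> n" "R_ratio_bounds n" "R_ratio_bounds (n + 1)"
  shows "R_ratio_bounds (n + 2)"
proof -
  define m where "m = real n"
  have m: "4 \<le> m" using assms(1) by (simp add: m_def)
  from assms(2,3) have pos: "0 < R n" "0 < R (n + 1)"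
    and lo: "rho * m / (m + 2) * R n \<le> R (n + 1)" "rho * (m + 1) / (m + 3) * R (n + 1) \<le> R (n + 2)"
    and hi: "R (n + 1) \<le> rho * R n" "R (n + 2) \<le> rho * R (n + 1)"
    by (auto simp: R_ratio_bounds_def m_def add_ac numeral_2_eq_2 numeral_3_eq_3)
  have "0 < rho * (m + 1) / (m + 3) * R (n + 1)"
    using pos m rho_bounds by simp
  then have "0 < R (n + 2)" using lo(2) by linarith
  have rec: "(m + 3) * R (n + 3) = (7 * m + 13) * R (n + 2) - (7 * m + 15) * R (n + 1) + (m + 1) * R n"
    using R_recurrence[of n] by (simp add: m_def)
  have "rho * (m + 2) / (m + 4) * R (n + 2) \<le> R (n + 3)"
    using ratio_lower_bound_step[OF m _ hi(1) lo(2) rec] \<open>0 < R (n + 2)\<close> by simp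
  moreover have "R (n + 3) \<le> rho * R (n + 2)"
    using ratio_upper_bound_step[OF m _ lo(1) hi(2) rec] \<open>0 < R (n + 2)\<close> by simp
  ultimately show ?thesis
    using \<open>0 < R (n + 2)\<close> by (simp add: R_ratio_bounds_def m_def add_ac numeral_3_eq_3)
qed

text \<open>The lower ratio bound fails for \<open>n \<le> 5\<close> (e.g. \<open>R 5 / R 4 < 4 rho / 6\<close>), hence the
  induction starts at 6.\<close>

lemma R_ratio_bounds: "6 \<le> n \<Longrightarrow> R_ratio_bounds n"
proof -
  have "R_ratio_bounds n \<and> R_ratio_bounds (Suc n)" if "6 \<le> n" for n
    using that
  proof (induction n rule: nat_induct_at_least)
    case base
    show ?case using rho_bounds by (simp add: R_ratio_bounds_def R_values)
  next
    case (Suc n)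
    then show ?case using R_ratio_bounds_step[of n] by simp
  qed
  then show "6 \<le> n \<Longrightarrow> R_ratio_bounds n" by blast
qed

section \<open>Growth of R\<close>

lemma R_pos: "6 \<le> n \<Longrightarrow> 0 < R n"
  using R_ratio_bounds by (simp add: R_ratio_bounds_def)

lemma R_le_rho_pow: "6 \<le> n \<Longrightarrow> R n \<le> R 6 * rho ^ (n - 6)"
proof (induction n rule: nat_induct_at_least)
  case base
  then show ?case by simp
next
  case (Suc n)
  have "R (Suc n) \<le> rho * R n"
    using R_ratio_bounds[OF Suc.hyps] by (simp add: R_ratio_bounds_def)
  also have "\<dots> \<le> rho * (R 6 * rho ^ (n - 6))"
    using Suc.IH rho_bounds by (intro mult_left_mono) auto
  also have "\<dots> = R 6 * rho ^ (Suc n - 6)"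
    unfolding Suc_diff_le[OF Suc.hyps] by (simp add: mult.left_commute)
  finally show ?case .
qed

lemma rho_pow_le_R: "6 \<le> n \<Longrightarrow> 42 * R 6 * rho ^ (n - 6) \<le> real n * (real n + 1) * R n"
proof (induction n rule: nat_induct_at_least)
  case base
  then show ?case by simp
next
  case (Suc n)
  have "42 * R 6 * rho ^ (Suc n - 6) = rho * (42 * R 6 * rho ^ (n - 6))"
    unfolding Suc_diff_le[OF Suc.hyps] by (simp add: mult.left_commute)
  also have "\<dots> \<le> rho * (real n * (real n + 1) * R n)"
    using Suc.IH rho_bounds by (intro mult_left_mono) auto
  also have "\<dots> = (real n + 1) * (real n + 2) * (rho * real n / (real n + 2) * R n)"
    by (simp add: field_simps)
  also have "\<dots> \<le> (real n + 1) * (real n + 2) * R (Suc n)"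
    using R_ratio_bounds[OF Suc.hyps] by (intro mult_left_mono) (auto simp: R_ratio_bounds_def)
  finally show ?case by (simp add: algebra_simps)
qed

lemma R_less_pow: "6 \<le> n \<Longrightarrow> R n < (rho * real n / (real n + 2)) ^ n"
proof -
  assume n: "6 \<le> n"
  have "(1 + 2 / real n) ^ n \<le> exp 2"
    using n by (intro exp_ge_one_plus_x_over_n_power_n) auto
  also have "exp 2 = exp 1 * (exp 1 :: real)"
    by (simp add: exp_add[symmetric])
  also have "\<dots> \<le> 9"
    using exp_le mult_mono[OF exp_le exp_le] by simp
  finally have exp_bound: "(1 + 2 / real n) ^ n \<le> 9" .
  have "9 * R 6 < 5 ^ 6" by (simp add: R_values)
  also have "(5::real) ^ 6 \<le> rho ^ 6"
    using rho_bounds by (intro power_mono) auto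
  finally have "R 6 < rho ^ 6 / 9" by simp
  have "R n \<le> R 6 * rho ^ (n - 6)"
    by (rule R_le_rho_pow[OF n])
  also have "\<dots> < rho ^ 6 / 9 * rho ^ (n - 6)"
    using \<open>R 6 < rho ^ 6 / 9\<close> rho_bounds by (intro mult_strict_right_mono) auto
  also have "\<dots> = rho ^ n / 9"
    using n by (simp flip: power_add)
  also have "\<dots> \<le> rho ^ n / (1 + 2 / real n) ^ n"
    using exp_bound rho_bounds by (intro divide_left_mono) (auto intro!: zero_less_power add_pos_nonneg)
  also have "\<dots> = (rho * real n / (real n + 2)) ^ n"
    using n by (simp add: power_divide field_simps)
  finally show ?thesis .
qed

lemma R_pow_Suc_less: "6 \<le> n \<Longrightarrow> R n ^ Suc n < R (Suc n) ^ n"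
proof -
  assume n: "6 \<le> n"
  have "R n ^ Suc n = R n * R n ^ n" by simp
  also have "\<dots> < (rho * real n / (real n + 2)) ^ n * R n ^ n"
    using R_less_pow[OF n] R_pos[OF n] by (intro mult_strict_right_mono) auto
  also have "\<dots> = (rho * real n / (real n + 2) * R n) ^ n"
    by (rule power_mult_distrib[symmetric])
  also have "\<dots> \<le> R (Suc n) ^ n"
    using R_ratio_bounds[OF n] rho_bounds
    by (intro power_mono) (auto simp: R_ratio_bounds_def intro!: mult_nonneg_nonneg)
  finally show ?thesis .
qed

section \<open>Monotonicity and limit of the roots\<close>

lemma root_less_root_Suc:
  fixes p q :: real
  assumes "0 < p" "0 < q" "0 < n" "p ^ Suc n < q ^ n"
  shows "root n p < root (Suc n) q"
proof -
  have "root n p ^ (n * Suc n) = (root n p ^ n) ^ Suc n"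
    by (rule power_mult)
  also have "\<dots> = p ^ Suc n"
    using assms by simp
  also have "\<dots> < q ^ n" by (fact assms(4))
  also have "\<dots> = (root (Suc n) q ^ Suc n) ^ n"
    using assms by (subst real_root_pow_pos2) auto
  also have "\<dots> = root (Suc n) q ^ (n * Suc n)"
    by (metis power_mult mult.commute)
  finally show ?thesis
    using assms by (auto intro: power_less_imp_less_base simp: real_root_gt_zero less_imp_le)
qed

lemma root_R_less_root_R_Suc: "1 \<le> n \<Longrightarrow> root n (R n) < root (Suc n) (R (Suc n))"
proof -
  assume "1 \<le> n"
  then consider "n = 1" | "n = 2" | "n = 3" | "n = 4" | "n = 5" | "6 \<le> n" by linarith
  then show ?thesis
  proof cases
    case 6
    then show ?thesis
      using R_pos R_pow_Suc_less by (intro root_less_root_Suc) auto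
  qed (use root_less_root_Suc[of "R n" "R (Suc n)" n] R_values in \<open>simp_all add: eval_nat_numeral\<close>)
qed

lemma root_tendsto_of_exponential_bounds:
  fixes a :: "nat \<Rightarrow> real"
  assumes "0 < c" "0 < C" "0 < L"
    and "\<forall>\<^sub>F n in sequentially. c * L ^ n / real n ^ k \<le> a n \<and> a n \<le> C * L ^ n"
  shows "(\<lambda>n. root n (a n)) \<longlonglongrightarrow> L"
proof (rule tendsto_sandwich)
  show "(\<lambda>n. root n c * L / root n (real n) ^ k) \<longlonglongrightarrow> L"
    using tendsto_mult[OF LIMSEQ_root_const[OF \<open>0 < c\<close>] tendsto_const[of L]]
      tendsto_power[OF LIMSEQ_root, of k]
    by (auto dest: tendsto_divide)
  show "(\<lambda>n. root n C * L) \<longlonglongrightarrow> L"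
    using tendsto_mult[OF LIMSEQ_root_const[OF \<open>0 < C\<close>] tendsto_const[of L]] by simp
  have roots: "root n (c * L ^ n / real n ^ k) = root n c * L / root n (real n) ^ k"
    "root n (C * L ^ n) = root n C * L" if "0 < n" for n
    using that \<open>0 < L\<close>
    by (simp_all add: real_root_mult real_root_divide real_root_power real_root_power_cancel)
  show "\<forall>\<^sub>F n in sequentially. root n c * L / root n (real n) ^ k \<le> root n (a n)"
    "\<forall>\<^sub>F n in sequentially. root n (a n) \<le> root n C * L"
    using eventually_conj[OF assms(4) eventually_gt_at_top[of 0]]
    by (auto elim!: eventually_mono simp flip: roots)
qed

lemma root_R_tendsto: "(\<lambda>n. root n (R n)) \<longlonglongrightarrow> rho"
proof (rule root_tendsto_of_exponential_bounds)
  show "0 < 21 * R 6 / rho ^ 6" "0 < R 6 / rho ^ 6" "0 < rho"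
    using rho_bounds by (simp_all add: R_values)
  show "\<forall>\<^sub>F n in sequentially.
          21 * R 6 / rho ^ 6 * rho ^ n / real n ^ 2 \<le> R n \<and> R n \<le> R 6 / rho ^ 6 * rho ^ n"
    unfolding eventually_sequentially
  proof (intro exI allI impI)
    fix n :: nat
    assume n: "6 \<le> n"
    have pow: "rho ^ n = rho ^ 6 * rho ^ (n - 6)"
      using n by (simp flip: power_add)
    have "21 * R 6 / rho ^ 6 * rho ^ n / real n ^ 2 = 42 * R 6 * rho ^ (n - 6) / (2 * real n ^ 2)"
      using rho_bounds by (simp add: pow field_simps)
    also have "\<dots> \<le> 42 * R 6 * rho ^ (n - 6) / (real n * (real n + 1))"
      using n rho_bounds by (intro divide_left_mono) (auto simp: R_values power2_eq_square)
    also have "\<dots> \<le> R n"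
      using rho_pow_le_R[OF n] n by (simp add: divide_le_eq mult.commute)
    finally show "21 * R 6 / rho ^ 6 * rho ^ n / real n ^ 2 \<le> R n \<and> R n \<le> R 6 / rho ^ 6 * rho ^ n"
      using R_le_rho_pow[OF n] rho_bounds by (simp add: pow)
  qed
qed

theorem corollary4p3:
  shows "(\<forall>n\<ge>1. root n (R n) < root (Suc n) (R (Suc n)))
         \<and> (\<lambda>n. root n (R n)) \<longlonglongrightarrow> 3 + 2 * sqrt 2"
  using root_R_less_root_R_Suc root_R_tendsto unfolding rho_def by simp

end
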